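(* The assignment sending a locally persistent category $\mathcal D$ to the pair $(\mathsf C^{\mathcal D},\mathrm W^{\mathcal D})$, and a locally persistent functor $F:\mathcal D\to\mathcal E$ to $F_*$ defined by $F_*(A)=F(A)$, $F_*((g,s))=(F(g),s)$, $F_*(\alpha_{g,h})=\alpha_{F(g),F(h)}$, defines a faithful functor from the category $\mathsf{LPC}$ of locally persistent categories and locally persistent functors to the category $\mathsf{W2Cat}$ of 2-weighted 2-categories and Lipschitz 2-functors. Moreover, for every locally persistent category $\mathcal D$ and all $A,B\in\mathcal D_0$, $d_{\mathcal D}(A,B)=d_{\mathsf C^{\mathcal D},\mathrm W^{\mathcal D}}(A,B)$.
   Context: A locally persistent category (LPC) $\mathcal D$ is a category enriched in $\mathsf{Fun}(\mathsf R,\mathsf{Set})$ ($\mathsf R$ the poset $\mathbb R_{\ge0}$, with Day convolution for addition). Explicitly: a class of objects $\mathcal D_0$; for $A,B$ and $s\ge0$ sets $\mathcal D_1(A,B)_s$ with shift maps $\mathrm S_{s,t}:\mathcal D_1(A,B)_s\to\mathcal D_1(A,B)_t$ for $s\le t$, $\mathrm S_{s,s}=\mathrm{id}$, $\mathrm S_{t,u}\mathrm S_{s,t}=\mathrm S_{s,u}$; associative compositions $\mathcal D_1(B,C)_t\times\mathcal D_1(A,B)_s\to\mathcal D_1(A,C)_{s+t}$, $(h,g)\mapsto hg$; identities $1_A\in\mathcal D_1(A,A)_0$ that are two-sided units; and $\mathrm S_{t,t'}(h)\mathrm S_{s,s'}(g)=\mathrm S_{s+t,s'+t'}(hg)$.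 A locally persistent functor $F:\mathcal D\to\mathcal E$ is a functor mapping $\mathcal D_1(A,B)_s\to\mathcal E_1(F(A),F(B))_s$, preserving composition and identities, with $\mathrm S_{s,t}(F(g))=F(\mathrm S_{s,t}(g))$. LPC interleaving: $A,B$ are $(s,t)$-interleaved if there are $f\in\mathcal D_1(A,B)_s$, $g\in\mathcal D_1(B,A)_t$ with $gf=\mathrm S_{0,s+t}(1_A)$ and $fg=\mathrm S_{0,s+t}(1_B)$; $d_{\mathcal D}(A,B)=\inf\max\{s,t\}$ over such. The 2-category $\mathsf C^{\mathcal D}$: objects $\mathcal D_0$; 1-morphisms $A\to B$ are pairs $(g,s)$ with $g\in\mathcal D_1(A,B)_s$; $(h,t)\circ(g,s)=(hg,s+t)$, identity $(1_A,0)$; between $(g,s)$ and $(h,t)$ there is a unique 2-morphism $\alpha_{g,h}$ iff $s\le t$ and $\mathrm S_{s,t}(g)=h$, otherwise none; $\alpha_{g,h}\alpha_{f,g}=\alpha_{f,h}$, $\alpha_{h,k}\bullet\alpha_{f,g}=\alpha_{hf,kg}$. $\mathrm W^{\mathcal D}_1((g,s))=s$, $\mathrm W^{\mathcal D}_2\equiv0$. A 2-weighted 2-category is a 2-category with $\mathrm W_1,\mathrm W_2\ge0$ on 1- and 2-morphisms, zero on identities, subadditive under composition of 1-morphisms and vertical/horizontal composition of 2-morphisms; a Lipschitz 2-functor $\Theta$ between them satisfies $\mathrm W'_1(\Theta(g))\le\mathrm W_1(g)$ and $\mathrm W'_2(\Theta(\alpha))\le\mathrm W_2(\alpha)$. The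 interleaving distance of a 2-weighted 2-category is $d_{\mathsf C,\mathrm W}(A,B)=\inf\max\{\mathrm W_1(g),\mathrm W_1(h),\mathrm W_2(\alpha),\mathrm W_2(\beta)\}$ over $g:A\to B$, $h:B\to A$, $\alpha:1_A\Rightarrow hg$, $\beta:1_B\Rightarrow gh$. Infima of empty sets are $\infty$. *)

theory Defs
  imports Main "HOL-Library.Extended_Real"
begin

text \<open>Hom-sets are indexed by source, target and persistence parameter s; shift maps
and compositions carry these indices explicitly (so hom-sets are effectively disjoint).
LComp D A B C s t h g is the composite hg of g in Hom A B s and h in Hom B C t.\<close>

record ('o, 'm) lpc =
  LOb :: "'o set"
  LHom :: "'o \<Rightarrow> 'o \<Rightarrow> real \<Rightarrow> 'm set"
  LShift :: "'o \<Rightarrow> 'o \<Rightarrow> real \<Rightarrow> real \<Rightarrow> 'm \<Rightarrow> 'm"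
  LComp :: "'o \<Rightarrow> 'o \<Rightarrow> 'o \<Rightarrow> real \<Rightarrow> real \<Rightarrow> 'm \<Rightarrow> 'm \<Rightarrow> 'm"
  LId :: "'o \<Rightarrow> 'm"

definition is_lpc :: "('o, 'm) lpc \<Rightarrow> bool" where
  "is_lpc D \<longleftrightarrow>
    (\<forall>A\<in>LOb D. \<forall>B\<in>LOb D. \<forall>s t g. 0 \<le> s \<and> s \<le> t \<and> g \<in> LHom D A B s
        \<longrightarrow> LShift D A B s t g \<in> LHom D A B t) \<and>
    (\<forall>A\<in>LOb D. \<forall>B\<in>LOb D. \<forall>s g. 0 \<le> s \<and> g \<in> LHom D A B s
        \<longrightarrow> LShift D A B s s g = g) \<and>
    (\<forall>A\<in>LOb D. \<forall>B\<in>LOb D. \<forall>s t u g. 0 \<le> s \<and> s \<le> t \<and> t \<le> u \<and> g \<in> LHom D A B s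
        \<longrightarrow> LShift D A B t u (LShift D A B s t g) = LShift D A B s u g) \<and>
    (\<forall>A\<in>LOb D. \<forall>B\<in>LOb D. \<forall>C\<in>LOb D. \<forall>s t g h. 0 \<le> s \<and> 0 \<le> t \<and>
        g \<in> LHom D A B s \<and> h \<in> LHom D B C t
        \<longrightarrow> LComp D A B C s t h g \<in> LHom D A C (s + t)) \<and>
    (\<forall>A\<in>LOb D. \<forall>B\<in>LOb D. \<forall>C\<in>LOb D. \<forall>E\<in>LOb D. \<forall>s t u g h k.
        0 \<le> s \<and> 0 \<le> t \<and> 0 \<le> u \<and>
        g \<in> LHom D A B s \<and> h \<in> LHom D B C t \<and> k \<in> LHom D C E u
        \<longrightarrow> LComp D A C E (s + t) u k (LComp D A B C s t h g)
            = LComp D A B E s (t + u) (LComp D B C E t u k h) g) \<and>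
    (\<forall>A\<in>LOb D. LId D A \<in> LHom D A A 0) \<and>
    (\<forall>A\<in>LOb D. \<forall>B\<in>LOb D. \<forall>s g. 0 \<le> s \<and> g \<in> LHom D A B s
        \<longrightarrow> LComp D A A B 0 s g (LId D A) = g \<and> LComp D A B B s 0 (LId D B) g = g) \<and>
    (\<forall>A\<in>LOb D. \<forall>B\<in>LOb D. \<forall>C\<in>LOb D. \<forall>s s' t t' g h.
        0 \<le> s \<and> s \<le> s' \<and> 0 \<le> t \<and> t \<le> t' \<and>
        g \<in> LHom D A B s \<and> h \<in> LHom D B C t
        \<longrightarrow> LComp D A B C s' t' (LShift D B C t t' h) (LShift D A B s s' g)
            = LShift D A C (s + t) (s' + t') (LComp D A B C s t h g))"

record ('o, 'm, 'p, 'n) lpfun =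
  FOb :: "'o \<Rightarrow> 'p"
  FMor :: "'o \<Rightarrow> 'o \<Rightarrow> real \<Rightarrow> 'm \<Rightarrow> 'n"

definition is_lpfunctor :: "('o, 'm) lpc \<Rightarrow> ('p, 'n) lpc \<Rightarrow> ('o, 'm, 'p, 'n) lpfun \<Rightarrow> bool" where
  "is_lpfunctor D E F \<longleftrightarrow>
    (\<forall>A\<in>LOb D. FOb F A \<in> LOb E) \<and>
    (\<forall>A\<in>LOb D. \<forall>B\<in>LOb D. \<forall>s g. 0 \<le> s \<and> g \<in> LHom D A B s
        \<longrightarrow> FMor F A B s g \<in> LHom E (FOb F A) (FOb F B) s) \<and>
    (\<forall>A\<in>LOb D. \<forall>B\<in>LOb D. \<forall>C\<in>LOb D. \<forall>s t g h. 0 \<le> s \<and> 0 \<le> t \<and>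
        g \<in> LHom D A B s \<and> h \<in> LHom D B C t
        \<longrightarrow> FMor F A C (s + t) (LComp D A B C s t h g)
            = LComp E (FOb F A) (FOb F B) (FOb F C) s t (FMor F B C t h) (FMor F A B s g)) \<and>
    (\<forall>A\<in>LOb D. FMor F A A 0 (LId D A) = LId E (FOb F A)) \<and>
    (\<forall>A\<in>LOb D. \<forall>B\<in>LOb D. \<forall>s t g. 0 \<le> s \<and> s \<le> t \<and> g \<in> LHom D A B s
        \<longrightarrow> LShift E (FOb F A) (FOb F B) s t (FMor F A B s g) = FMor F A B t (LShift D A B s t g))"

definition lpfun_id :: "('o, 'm, 'o, 'm) lpfun" where
  "lpfun_id = \<lparr>FOb = (\<lambda>A. A), FMor = (\<lambda>A B s g. g)\<rparr>"

definition lpfun_comp :: "('p, 'n, 'q, 'k) lpfun \<Rightarrow> ('o, 'm, 'p, 'n) lpfun \<Rightarrow> ('o, 'm, 'q, 'k) lpfun" where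
  "lpfun_comp G F = \<lparr>FOb = (\<lambda>A. FOb G (FOb F A)),
     FMor = (\<lambda>A B s g. FMor G (FOb F A) (FOb F B) s (FMor F A B s g))\<rparr>"

definition lpfun_eq :: "('o, 'm) lpc \<Rightarrow> ('o, 'm, 'p, 'n) lpfun \<Rightarrow> ('o, 'm, 'p, 'n) lpfun \<Rightarrow> bool" where
  "lpfun_eq D F G \<longleftrightarrow>
    (\<forall>A\<in>LOb D. FOb F A = FOb G A) \<and>
    (\<forall>A\<in>LOb D. \<forall>B\<in>LOb D. \<forall>s g. 0 \<le> s \<and> g \<in> LHom D A B s \<longrightarrow> FMor F A B s g = FMor G A B s g)"

definition lpc_dist :: "('o, 'm) lpc \<Rightarrow> 'o \<Rightarrow> 'o \<Rightarrow> ereal" where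
  "lpc_dist D A B = Inf {ereal (max s t) | s t f g.
     0 \<le> s \<and> 0 \<le> t \<and> f \<in> LHom D A B s \<and> g \<in> LHom D B A t \<and>
     LComp D A B A s t g f = LShift D A A 0 (s + t) (LId D A) \<and>
     LComp D B A B t s f g = LShift D B B 0 (s + t) (LId D B)}"

text \<open>1-morphisms carry source/target maps; 2-morphisms carry source/target 1-morphisms.
tc_comp1 h g = h \<circ> g; tc_vcomp \<beta> \<alpha> = \<beta>\<alpha> (vertical);
tc_hcomp \<beta> \<alpha> = \<beta> \<bullet> \<alpha> (horizontal, \<alpha> on the right).\<close>

record ('a, 'b, 'c) twocat =
  tc_ob :: "'a set"
  tc_m1 :: "'b set"
  tc_src1 :: "'b \<Rightarrow> 'a"
  tc_tgt1 :: "'b \<Rightarrow> 'a"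
  tc_m2 :: "'c set"
  tc_src2 :: "'c \<Rightarrow> 'b"
  tc_tgt2 :: "'c \<Rightarrow> 'b"
  tc_comp1 :: "'b \<Rightarrow> 'b \<Rightarrow> 'b"
  tc_id1 :: "'a \<Rightarrow> 'b"
  tc_vcomp :: "'c \<Rightarrow> 'c \<Rightarrow> 'c"
  tc_hcomp :: "'c \<Rightarrow> 'c \<Rightarrow> 'c"
  tc_id2 :: "'b \<Rightarrow> 'c"

definition two_category :: "('a, 'b, 'c) twocat \<Rightarrow> bool" where
  "two_category C \<longleftrightarrow>
    (\<forall>g\<in>tc_m1 C. tc_src1 C g \<in> tc_ob C \<and> tc_tgt1 C g \<in> tc_ob C) \<and>
    (\<forall>A\<in>tc_ob C. tc_id1 C A \<in> tc_m1 C \<and> tc_src1 C (tc_id1 C A) = A \<and> tc_tgt1 C (tc_id1 C A) = A) \<and>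
    (\<forall>g\<in>tc_m1 C. \<forall>h\<in>tc_m1 C. tc_tgt1 C g = tc_src1 C h \<longrightarrow>
        tc_comp1 C h g \<in> tc_m1 C \<and> tc_src1 C (tc_comp1 C h g) = tc_src1 C g
        \<and> tc_tgt1 C (tc_comp1 C h g) = tc_tgt1 C h) \<and>
    (\<forall>g\<in>tc_m1 C. \<forall>h\<in>tc_m1 C. \<forall>k\<in>tc_m1 C. tc_tgt1 C g = tc_src1 C h \<and> tc_tgt1 C h = tc_src1 C k \<longrightarrow>
        tc_comp1 C k (tc_comp1 C h g) = tc_comp1 C (tc_comp1 C k h) g) \<and>
    (\<forall>g\<in>tc_m1 C. tc_comp1 C g (tc_id1 C (tc_src1 C g)) = g \<and> tc_comp1 C (tc_id1 C (tc_tgt1 C g)) g = g) \<and>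
    (\<forall>\<alpha>\<in>tc_m2 C. tc_src2 C \<alpha> \<in> tc_m1 C \<and> tc_tgt2 C \<alpha> \<in> tc_m1 C \<and>
        tc_src1 C (tc_src2 C \<alpha>) = tc_src1 C (tc_tgt2 C \<alpha>) \<and>
        tc_tgt1 C (tc_src2 C \<alpha>) = tc_tgt1 C (tc_tgt2 C \<alpha>)) \<and>
    (\<forall>g\<in>tc_m1 C. tc_id2 C g \<in> tc_m2 C \<and> tc_src2 C (tc_id2 C g) = g \<and> tc_tgt2 C (tc_id2 C g) = g) \<and>
    (\<forall>\<alpha>\<in>tc_m2 C. \<forall>\<beta>\<in>tc_m2 C. tc_tgt2 C \<alpha> = tc_src2 C \<beta> \<longrightarrow>
        tc_vcomp C \<beta> \<alpha> \<in> tc_m2 C \<and> tc_src2 C (tc_vcomp C \<beta> \<alpha>) = tc_src2 C \<alpha>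
        \<and> tc_tgt2 C (tc_vcomp C \<beta> \<alpha>) = tc_tgt2 C \<beta>) \<and>
    (\<forall>\<alpha>\<in>tc_m2 C. \<forall>\<beta>\<in>tc_m2 C. \<forall>\<gamma>\<in>tc_m2 C. tc_tgt2 C \<alpha> = tc_src2 C \<beta> \<and> tc_tgt2 C \<beta> = tc_src2 C \<gamma> \<longrightarrow>
        tc_vcomp C \<gamma> (tc_vcomp C \<beta> \<alpha>) = tc_vcomp C (tc_vcomp C \<gamma> \<beta>) \<alpha>) \<and>
    (\<forall>\<alpha>\<in>tc_m2 C. tc_vcomp C \<alpha> (tc_id2 C (tc_src2 C \<alpha>)) = \<alpha> \<and> tc_vcomp C (tc_id2 C (tc_tgt2 C \<alpha>)) \<alpha> = \<alpha>) \<and>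
    (\<forall>\<alpha>\<in>tc_m2 C. \<forall>\<beta>\<in>tc_m2 C. tc_tgt1 C (tc_src2 C \<alpha>) = tc_src1 C (tc_src2 C \<beta>) \<longrightarrow>
        tc_hcomp C \<beta> \<alpha> \<in> tc_m2 C \<and>
        tc_src2 C (tc_hcomp C \<beta> \<alpha>) = tc_comp1 C (tc_src2 C \<beta>) (tc_src2 C \<alpha>) \<and>
        tc_tgt2 C (tc_hcomp C \<beta> \<alpha>) = tc_comp1 C (tc_tgt2 C \<beta>) (tc_tgt2 C \<alpha>)) \<and>
    (\<forall>\<alpha>\<in>tc_m2 C. \<forall>\<beta>\<in>tc_m2 C. \<forall>\<gamma>\<in>tc_m2 C.
        tc_tgt1 C (tc_src2 C \<alpha>) = tc_src1 C (tc_src2 C \<beta>) \<and>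
        tc_tgt1 C (tc_src2 C \<beta>) = tc_src1 C (tc_src2 C \<gamma>) \<longrightarrow>
        tc_hcomp C \<gamma> (tc_hcomp C \<beta> \<alpha>) = tc_hcomp C (tc_hcomp C \<gamma> \<beta>) \<alpha>) \<and>
    (\<forall>\<alpha>\<in>tc_m2 C. tc_hcomp C (tc_id2 C (tc_id1 C (tc_tgt1 C (tc_src2 C \<alpha>)))) \<alpha> = \<alpha> \<and>
        tc_hcomp C \<alpha> (tc_id2 C (tc_id1 C (tc_src1 C (tc_src2 C \<alpha>)))) = \<alpha>) \<and>
    (\<forall>g\<in>tc_m1 C. \<forall>h\<in>tc_m1 C. tc_tgt1 C g = tc_src1 C h \<longrightarrow>
        tc_hcomp C (tc_id2 C h) (tc_id2 C g) = tc_id2 C (tc_comp1 C h g)) \<and>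
    (\<forall>\<alpha>\<in>tc_m2 C. \<forall>\<alpha>'\<in>tc_m2 C. \<forall>\<beta>\<in>tc_m2 C. \<forall>\<beta>'\<in>tc_m2 C.
        tc_tgt2 C \<alpha> = tc_src2 C \<alpha>' \<and> tc_tgt2 C \<beta> = tc_src2 C \<beta>' \<and>
        tc_tgt1 C (tc_src2 C \<alpha>) = tc_src1 C (tc_src2 C \<beta>) \<longrightarrow>
        tc_hcomp C (tc_vcomp C \<beta>' \<beta>) (tc_vcomp C \<alpha>' \<alpha>)
          = tc_vcomp C (tc_hcomp C \<beta>' \<alpha>') (tc_hcomp C \<beta> \<alpha>))"

definition weighted_twocat :: "('a, 'b, 'c) twocat \<Rightarrow> ('b \<Rightarrow> real) \<Rightarrow> ('c \<Rightarrow> real) \<Rightarrow> bool" where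
  "weighted_twocat C W1 W2 \<longleftrightarrow> two_category C \<and>
    (\<forall>g\<in>tc_m1 C. 0 \<le> W1 g) \<and> (\<forall>\<alpha>\<in>tc_m2 C. 0 \<le> W2 \<alpha>) \<and>
    (\<forall>A\<in>tc_ob C. W1 (tc_id1 C A) = 0) \<and> (\<forall>g\<in>tc_m1 C. W2 (tc_id2 C g) = 0) \<and>
    (\<forall>g\<in>tc_m1 C. \<forall>h\<in>tc_m1 C. tc_tgt1 C g = tc_src1 C h \<longrightarrow>
        W1 (tc_comp1 C h g) \<le> W1 h + W1 g) \<and>
    (\<forall>\<alpha>\<in>tc_m2 C. \<forall>\<beta>\<in>tc_m2 C. tc_tgt2 C \<alpha> = tc_src2 C \<beta> \<longrightarrow>
        W2 (tc_vcomp C \<beta> \<alpha>) \<le> W2 \<beta> + W2 \<alpha>) \<and>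
    (\<forall>\<alpha>\<in>tc_m2 C. \<forall>\<beta>\<in>tc_m2 C. tc_tgt1 C (tc_src2 C \<alpha>) = tc_src1 C (tc_src2 C \<beta>) \<longrightarrow>
        W2 (tc_hcomp C \<beta> \<alpha>) \<le> W2 \<beta> + W2 \<alpha>)"

record ('a, 'b, 'c, 'x, 'y, 'z) twofun =
  TOb :: "'a \<Rightarrow> 'x"
  TM1 :: "'b \<Rightarrow> 'y"
  TM2 :: "'c \<Rightarrow> 'z"

definition two_functor :: "('a, 'b, 'c) twocat \<Rightarrow> ('x, 'y, 'z) twocat \<Rightarrow> ('a, 'b, 'c, 'x, 'y, 'z) twofun \<Rightarrow> bool" where
  "two_functor C C' T \<longleftrightarrow>
    (\<forall>A\<in>tc_ob C. TOb T A \<in> tc_ob C') \<and>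
    (\<forall>g\<in>tc_m1 C. TM1 T g \<in> tc_m1 C' \<and> tc_src1 C' (TM1 T g) = TOb T (tc_src1 C g)
        \<and> tc_tgt1 C' (TM1 T g) = TOb T (tc_tgt1 C g)) \<and>
    (\<forall>\<alpha>\<in>tc_m2 C. TM2 T \<alpha> \<in> tc_m2 C' \<and> tc_src2 C' (TM2 T \<alpha>) = TM1 T (tc_src2 C \<alpha>)
        \<and> tc_tgt2 C' (TM2 T \<alpha>) = TM1 T (tc_tgt2 C \<alpha>)) \<and>
    (\<forall>A\<in>tc_ob C. TM1 T (tc_id1 C A) = tc_id1 C' (TOb T A)) \<and>
    (\<forall>g\<in>tc_m1 C. \<forall>h\<in>tc_m1 C. tc_tgt1 C g = tc_src1 C h \<longrightarrow>
        TM1 T (tc_comp1 C h g) = tc_comp1 C' (TM1 T h) (TM1 T g)) \<and>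
    (\<forall>g\<in>tc_m1 C. TM2 T (tc_id2 C g) = tc_id2 C' (TM1 T g)) \<and>
    (\<forall>\<alpha>\<in>tc_m2 C. \<forall>\<beta>\<in>tc_m2 C. tc_tgt2 C \<alpha> = tc_src2 C \<beta> \<longrightarrow>
        TM2 T (tc_vcomp C \<beta> \<alpha>) = tc_vcomp C' (TM2 T \<beta>) (TM2 T \<alpha>)) \<and>
    (\<forall>\<alpha>\<in>tc_m2 C. \<forall>\<beta>\<in>tc_m2 C. tc_tgt1 C (tc_src2 C \<alpha>) = tc_src1 C (tc_src2 C \<beta>) \<longrightarrow>
        TM2 T (tc_hcomp C \<beta> \<alpha>) = tc_hcomp C' (TM2 T \<beta>) (TM2 T \<alpha>))"

definition lipschitz_twofun ::
  "('a, 'b, 'c) twocat \<Rightarrow> ('b \<Rightarrow> real) \<Rightarrow> ('c \<Rightarrow> real) \<Rightarrow>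
   ('x, 'y, 'z) twocat \<Rightarrow> ('y \<Rightarrow> real) \<Rightarrow> ('z \<Rightarrow> real) \<Rightarrow>
   ('a, 'b, 'c, 'x, 'y, 'z) twofun \<Rightarrow> bool" where
  "lipschitz_twofun C W1 W2 C' W1' W2' T \<longleftrightarrow> two_functor C C' T \<and>
    (\<forall>g\<in>tc_m1 C. W1' (TM1 T g) \<le> W1 g) \<and> (\<forall>\<alpha>\<in>tc_m2 C. W2' (TM2 T \<alpha>) \<le> W2 \<alpha>)"

definition twofun_id :: "('a, 'b, 'c, 'a, 'b, 'c) twofun" where
  "twofun_id = \<lparr>TOb = (\<lambda>x. x), TM1 = (\<lambda>x. x), TM2 = (\<lambda>x. x)\<rparr>"

definition twofun_comp :: "('x, 'y, 'z, 'u, 'v, 'w) twofun \<Rightarrow> ('a, 'b, 'c, 'x, 'y, 'z) twofun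
     \<Rightarrow> ('a, 'b, 'c, 'u, 'v, 'w) twofun" where
  "twofun_comp S T = \<lparr>TOb = TOb S \<circ> TOb T, TM1 = TM1 S \<circ> TM1 T, TM2 = TM2 S \<circ> TM2 T\<rparr>"

definition twofun_eq :: "('a, 'b, 'c) twocat \<Rightarrow> ('a, 'b, 'c, 'x, 'y, 'z) twofun \<Rightarrow> ('a, 'b, 'c, 'x, 'y, 'z) twofun \<Rightarrow> bool" where
  "twofun_eq C S T \<longleftrightarrow> (\<forall>A\<in>tc_ob C. TOb S A = TOb T A) \<and>
     (\<forall>g\<in>tc_m1 C. TM1 S g = TM1 T g) \<and> (\<forall>\<alpha>\<in>tc_m2 C. TM2 S \<alpha> = TM2 T \<alpha>)"

definition wdist :: "('a, 'b, 'c) twocat \<Rightarrow> ('b \<Rightarrow> real) \<Rightarrow> ('c \<Rightarrow> real) \<Rightarrow> 'a \<Rightarrow> 'a \<Rightarrow> ereal" where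
  "wdist C W1 W2 A B = Inf {ereal (max (max (W1 g) (W1 h)) (max (W2 \<alpha>) (W2 \<beta>))) | g h \<alpha> \<beta>.
     g \<in> tc_m1 C \<and> tc_src1 C g = A \<and> tc_tgt1 C g = B \<and>
     h \<in> tc_m1 C \<and> tc_src1 C h = B \<and> tc_tgt1 C h = A \<and>
     \<alpha> \<in> tc_m2 C \<and> tc_src2 C \<alpha> = tc_id1 C A \<and> tc_tgt2 C \<alpha> = tc_comp1 C h g \<and>
     \<beta> \<in> tc_m2 C \<and> tc_src2 C \<beta> = tc_id1 C B \<and> tc_tgt2 C \<beta> = tc_comp1 C g h}"

text \<open>A 1-morphism (g,s) : A \<rightarrow> B is represented as the tuple (A, B, s, g);
the unique 2-morphism \<alpha>_{g,h} is represented by the pair of its source and target.\<close>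

type_synonym ('o, 'm) cd1 = "'o \<times> 'o \<times> real \<times> 'm"

definition cd_comp1 :: "('o, 'm) lpc \<Rightarrow> ('o, 'm) cd1 \<Rightarrow> ('o, 'm) cd1 \<Rightarrow> ('o, 'm) cd1" where
  "cd_comp1 D x y = (case x of (B', C, t, h) \<Rightarrow> case y of (A, B, s, g) \<Rightarrow>
      (A, C, s + t, LComp D A B C s t h g))"

definition CD :: "('o, 'm) lpc \<Rightarrow> ('o, ('o, 'm) cd1, ('o, 'm) cd1 \<times> ('o, 'm) cd1) twocat" where
  "CD D = \<lparr>
     tc_ob = LOb D,
     tc_m1 = {(A, B, s, g) | A B s g. A \<in> LOb D \<and> B \<in> LOb D \<and> 0 \<le> s \<and> g \<in> LHom D A B s},
     tc_src1 = (\<lambda>(A, B, s, g). A),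
     tc_tgt1 = (\<lambda>(A, B, s, g). B),
     tc_m2 = {((A, B, s, g), (A, B, t, h)) | A B s t g h.
                A \<in> LOb D \<and> B \<in> LOb D \<and> 0 \<le> s \<and> g \<in> LHom D A B s \<and> h \<in> LHom D A B t \<and>
                s \<le> t \<and> LShift D A B s t g = h},
     tc_src2 = fst,
     tc_tgt2 = snd,
     tc_comp1 = cd_comp1 D,
     tc_id1 = (\<lambda>A. (A, A, 0, LId D A)),
     tc_vcomp = (\<lambda>\<beta> \<alpha>. (fst \<alpha>, snd \<beta>)),
     tc_hcomp = (\<lambda>\<beta> \<alpha>. (cd_comp1 D (fst \<beta>) (fst \<alpha>), cd_comp1 D (snd \<beta>) (snd \<alpha>))),
     tc_id2 = (\<lambda>x. (x, x))\<rparr>"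

definition WD1 :: "('o, 'm) cd1 \<Rightarrow> real" where
  "WD1 x = (case x of (A, B, s, g) \<Rightarrow> s)"

definition WD2 :: "('o, 'm) cd1 \<times> ('o, 'm) cd1 \<Rightarrow> real" where
  "WD2 \<alpha> = 0"

definition lpstar_m1 :: "('o, 'm, 'p, 'n) lpfun \<Rightarrow> ('o, 'm) cd1 \<Rightarrow> ('p, 'n) cd1" where
  "lpstar_m1 F x = (case x of (A, B, s, g) \<Rightarrow> (FOb F A, FOb F B, s, FMor F A B s g))"

definition lpstar :: "('o, 'm, 'p, 'n) lpfun \<Rightarrow>
   ('o, ('o, 'm) cd1, ('o, 'm) cd1 \<times> ('o, 'm) cd1, 'p, ('p, 'n) cd1, ('p, 'n) cd1 \<times> ('p, 'n) cd1) twofun" where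
  "lpstar F = \<lparr>TOb = FOb F, TM1 = lpstar_m1 F,
     TM2 = (\<lambda>\<alpha>. (lpstar_m1 F (fst \<alpha>), lpstar_m1 F (snd \<alpha>)))\<rparr>"

end

theory Submission
  imports Defs
begin

text \<open>The 2-cells of \<open>C\<^sup>D\<close> are determined by their boundary and have weight zero, so the
2-category axioms of \<open>C\<^sup>D\<close> reduce to those of \<open>D\<close>; the interchange law between shifts and
composition is what makes horizontal composites of 2-cells again 2-cells. \<open>F\<^sub>*\<close> is Lipschitz
because \<open>F\<close> preserves degrees and shifts, and faithful because \<open>F\<close> is read off \<open>F\<^sub>*\<close> on
1-cells. Finally, a 2-cell \<open>1\<^sub>A \<Rightarrow> (g,t)(f,s)\<close> exists exactly when \<open>g f\<close> is the shift of
\<open>1\<^sub>A\<close> to degree \<open>s + t\<close>, so the weighted interleavings of \<open>C\<^sup>D\<close> are the LPC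
interleavings, of weight \<open>max s t\<close>.\<close>

locale locally_persistent_category =
  fixes D :: "('o, 'm) lpc"
  assumes is_lpc: "is_lpc D"
begin

lemma shift_in_hom:
  "A \<in> LOb D \<Longrightarrow> B \<in> LOb D \<Longrightarrow> 0 \<le> s \<Longrightarrow> s \<le> t \<Longrightarrow> g \<in> LHom D A B s \<Longrightarrow>
   LShift D A B s t g \<in> LHom D A B t"
  using is_lpc by (simp add: is_lpc_def)

lemma shift_refl:
  "A \<in> LOb D \<Longrightarrow> B \<in> LOb D \<Longrightarrow> 0 \<le> s \<Longrightarrow> g \<in> LHom D A B s \<Longrightarrow> LShift D A B s s g = g"
  using is_lpc by (simp add: is_lpc_def)

lemma shift_shift:
  "A \<in> LOb D \<Longrightarrow> B \<in> LOb D \<Longrightarrow> 0 \<le> s \<Longrightarrow> s \<le> t \<Longrightarrow> t \<le> u \<Longrightarrow> g \<in> LHom D A B s \<Longrightarrow>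
   LShift D A B t u (LShift D A B s t g) = LShift D A B s u g"
  using is_lpc by (simp add: is_lpc_def)

lemma comp_in_hom:
  "A \<in> LOb D \<Longrightarrow> B \<in> LOb D \<Longrightarrow> C \<in> LOb D \<Longrightarrow> 0 \<le> s \<Longrightarrow> 0 \<le> t \<Longrightarrow>
   g \<in> LHom D A B s \<Longrightarrow> h \<in> LHom D B C t \<Longrightarrow> LComp D A B C s t h g \<in> LHom D A C (s + t)"
  using is_lpc by (simp add: is_lpc_def)

lemma comp_assoc:
  "A \<in> LOb D \<Longrightarrow> B \<in> LOb D \<Longrightarrow> C \<in> LOb D \<Longrightarrow> E \<in> LOb D \<Longrightarrow> 0 \<le> s \<Longrightarrow> 0 \<le> t \<Longrightarrow> 0 \<le> u \<Longrightarrow>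
   g \<in> LHom D A B s \<Longrightarrow> h \<in> LHom D B C t \<Longrightarrow> k \<in> LHom D C E u \<Longrightarrow>
   LComp D A C E (s + t) u k (LComp D A B C s t h g) = LComp D A B E s (t + u) (LComp D B C E t u k h) g"
  using is_lpc by (simp add: is_lpc_def)

lemma id_in_hom: "A \<in> LOb D \<Longrightarrow> LId D A \<in> LHom D A A 0"
  using is_lpc by (simp add: is_lpc_def)

lemma comp_id_right:
  "A \<in> LOb D \<Longrightarrow> B \<in> LOb D \<Longrightarrow> 0 \<le> s \<Longrightarrow> g \<in> LHom D A B s \<Longrightarrow> LComp D A A B 0 s g (LId D A) = g"
  using is_lpc by (simp add: is_lpc_def)

lemma comp_id_left:
  "A \<in> LOb D \<Longrightarrow> B \<in> LOb D \<Longrightarrow> 0 \<le> s \<Longrightarrow> g \<in> LHom D A B s \<Longrightarrow> LComp D A B B s 0 (LId D B) g = g"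
  using is_lpc by (simp add: is_lpc_def)

lemma comp_shift_shift:
  "A \<in> LOb D \<Longrightarrow> B \<in> LOb D \<Longrightarrow> C \<in> LOb D \<Longrightarrow> 0 \<le> s \<Longrightarrow> s \<le> s' \<Longrightarrow> 0 \<le> t \<Longrightarrow> t \<le> t' \<Longrightarrow>
   g \<in> LHom D A B s \<Longrightarrow> h \<in> LHom D B C t \<Longrightarrow>
   LComp D A B C s' t' (LShift D B C t t' h) (LShift D A B s s' g)
     = LShift D A C (s + t) (s' + t') (LComp D A B C s t h g)"
  using is_lpc by (simp add: is_lpc_def)

lemmas lpc_laws = shift_in_hom shift_refl shift_shift comp_in_hom comp_assoc id_in_hom
  comp_id_right comp_id_left comp_shift_shift

lemma two_category_CD: "two_category (CD D)"
  unfolding two_category_def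
  by (intro conjI) (auto simp: CD_def cd_comp1_def lpc_laws add.assoc)

lemma weighted_twocat_CD: "weighted_twocat (CD D) WD1 WD2"
  unfolding weighted_twocat_def using two_category_CD
  by (auto simp: CD_def cd_comp1_def WD1_def WD2_def)

lemma CD_unit_2cell_iff:
  assumes "A \<in> LOb D" "B \<in> LOb D" "0 \<le> s" "0 \<le> t" "f \<in> LHom D A B s" "g \<in> LHom D B A t"
  shows "(tc_id1 (CD D) A, tc_comp1 (CD D) (B, A, t, g) (A, B, s, f)) \<in> tc_m2 (CD D) \<longleftrightarrow>
    LComp D A B A s t g f = LShift D A A 0 (s + t) (LId D A)"
  using assms id_in_hom comp_in_hom[of A B A s t f g] by (auto simp: CD_def cd_comp1_def)

lemma lpc_dist_eq_wdist:
  assumes A: "A \<in> LOb D" and B: "B \<in> LOb D"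
  shows "lpc_dist D A B = wdist (CD D) WD1 WD2 A B"
proof -
  let ?C = "CD D"
  have "{ereal (max s t) | s t f g.
          0 \<le> s \<and> 0 \<le> t \<and> f \<in> LHom D A B s \<and> g \<in> LHom D B A t \<and>
          LComp D A B A s t g f = LShift D A A 0 (s + t) (LId D A) \<and>
          LComp D B A B t s f g = LShift D B B 0 (s + t) (LId D B)} =
        {ereal (max (max (WD1 g) (WD1 h)) (max (WD2 \<alpha>) (WD2 \<beta>))) | g h \<alpha> \<beta>.
          g \<in> tc_m1 ?C \<and> tc_src1 ?C g = A \<and> tc_tgt1 ?C g = B \<and>
          h \<in> tc_m1 ?C \<and> tc_src1 ?C h = B \<and> tc_tgt1 ?C h = A \<and>
          \<alpha> \<in> tc_m2 ?C \<and> tc_src2 ?C \<alpha> = tc_id1 ?C A \<and> tc_tgt2 ?C \<alpha> = tc_comp1 ?C h g \<and>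
          \<beta> \<in> tc_m2 ?C \<and> tc_src2 ?C \<beta> = tc_id1 ?C B \<and> tc_tgt2 ?C \<beta> = tc_comp1 ?C g h}"
    (is "?I = ?W")
  proof (intro set_eqI iffI)
    fix x assume "x \<in> ?I"
    then obtain s t f g where x: "x = ereal (max s t)" and st: "0 \<le> s" "0 \<le> t"
      and fg: "f \<in> LHom D A B s" "g \<in> LHom D B A t"
      and gf_id: "LComp D A B A s t g f = LShift D A A 0 (s + t) (LId D A)"
      and fg_id: "LComp D B A B t s f g = LShift D B B 0 (s + t) (LId D B)"
      by blast
    let ?f = "(A, B, s, f)" and ?g = "(B, A, t, g)"
    have "(tc_id1 ?C A, tc_comp1 ?C ?g ?f) \<in> tc_m2 ?C"
      using CD_unit_2cell_iff[OF A B st fg] gf_id by simp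
    moreover have "(tc_id1 ?C B, tc_comp1 ?C ?f ?g) \<in> tc_m2 ?C"
      using CD_unit_2cell_iff[OF B A st(2,1) fg(2,1)] fg_id by (simp add: add.commute)
    ultimately show "x \<in> ?W"
      using A B st fg x
      by - (rule CollectI, rule exI[of _ ?f], rule exI[of _ ?g],
          rule exI[of _ "(tc_id1 ?C A, tc_comp1 ?C ?g ?f)"],
          rule exI[of _ "(tc_id1 ?C B, tc_comp1 ?C ?f ?g)"],
          simp add: CD_def WD1_def WD2_def)
  next
    fix x assume "x \<in> ?W"
    then obtain g h \<alpha> \<beta> where x: "x = ereal (max (max (WD1 g) (WD1 h)) (max (WD2 \<alpha>) (WD2 \<beta>)))"
      and g: "g \<in> tc_m1 ?C" "tc_src1 ?C g = A" "tc_tgt1 ?C g = B"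
      and h: "h \<in> tc_m1 ?C" "tc_src1 ?C h = B" "tc_tgt1 ?C h = A"
      and \<alpha>: "\<alpha> \<in> tc_m2 ?C" "tc_src2 ?C \<alpha> = tc_id1 ?C A" "tc_tgt2 ?C \<alpha> = tc_comp1 ?C h g"
      and \<beta>: "\<beta> \<in> tc_m2 ?C" "tc_src2 ?C \<beta> = tc_id1 ?C B" "tc_tgt2 ?C \<beta> = tc_comp1 ?C g h"
      by blast
    obtain s f where g_eq: "g = (A, B, s, f)" and s: "0 \<le> s" and f: "f \<in> LHom D A B s"
      using g by (auto simp: CD_def)
    obtain t k where h_eq: "h = (B, A, t, k)" and t: "0 \<le> t" and k: "k \<in> LHom D B A t"
      using h by (auto simp: CD_def)
    have "\<alpha> = (tc_id1 ?C A, tc_comp1 ?C h g)" "\<beta> = (tc_id1 ?C B, tc_comp1 ?C g h)"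
      using \<alpha>(2,3) \<beta>(2,3) by (simp_all add: CD_def prod_eq_iff)
    then have "LComp D A B A s t k f = LShift D A A 0 (s + t) (LId D A)"
      and "LComp D B A B t s f k = LShift D B B 0 (s + t) (LId D B)"
      using \<alpha>(1) \<beta>(1) g_eq h_eq CD_unit_2cell_iff[OF A B s t f k] CD_unit_2cell_iff[OF B A t s k f]
      by (simp_all add: add.commute)
    moreover have "x = ereal (max s t)"
      using x g_eq h_eq s t by (simp add: WD1_def WD2_def)
    ultimately show "x \<in> ?I"
      using s t f k by blast
  qed
  then show ?thesis
    unfolding lpc_dist_def wdist_def by simp
qed

end

locale lp_functor =
  fixes D :: "('o, 'm) lpc" and E :: "('p, 'n) lpc" and F :: "('o, 'm, 'p, 'n) lpfun"
  assumes is_lpfunctor: "is_lpfunctor D E F"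
begin

lemma ob_in_LOb: "A \<in> LOb D \<Longrightarrow> FOb F A \<in> LOb E"
  using is_lpfunctor by (simp add: is_lpfunctor_def)

lemma mor_in_hom:
  "A \<in> LOb D \<Longrightarrow> B \<in> LOb D \<Longrightarrow> 0 \<le> s \<Longrightarrow> g \<in> LHom D A B s \<Longrightarrow>
   FMor F A B s g \<in> LHom E (FOb F A) (FOb F B) s"
  using is_lpfunctor by (simp add: is_lpfunctor_def)

lemma mor_comp:
  "A \<in> LOb D \<Longrightarrow> B \<in> LOb D \<Longrightarrow> C \<in> LOb D \<Longrightarrow> 0 \<le> s \<Longrightarrow> 0 \<le> t \<Longrightarrow>
   g \<in> LHom D A B s \<Longrightarrow> h \<in> LHom D B C t \<Longrightarrow>
   FMor F A C (s + t) (LComp D A B C s t h g)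
     = LComp E (FOb F A) (FOb F B) (FOb F C) s t (FMor F B C t h) (FMor F A B s g)"
  using is_lpfunctor by (simp add: is_lpfunctor_def)

lemma mor_id: "A \<in> LOb D \<Longrightarrow> FMor F A A 0 (LId D A) = LId E (FOb F A)"
  using is_lpfunctor by (simp add: is_lpfunctor_def)

lemma mor_shift:
  "A \<in> LOb D \<Longrightarrow> B \<in> LOb D \<Longrightarrow> 0 \<le> s \<Longrightarrow> s \<le> t \<Longrightarrow> g \<in> LHom D A B s \<Longrightarrow>
   LShift E (FOb F A) (FOb F B) s t (FMor F A B s g) = FMor F A B t (LShift D A B s t g)"
  using is_lpfunctor by (simp add: is_lpfunctor_def)

lemma lipschitz_lpstar: "lipschitz_twofun (CD D) WD1 WD2 (CD E) WD1 WD2 (lpstar F)"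
  unfolding lipschitz_twofun_def two_functor_def
  by (intro conjI)
    (auto simp: CD_def cd_comp1_def WD1_def WD2_def lpstar_def lpstar_m1_def
      ob_in_LOb mor_in_hom mor_comp mor_id mor_shift)

end

lemma lpstar_lpfun_id: "twofun_eq (CD D) (lpstar lpfun_id) twofun_id"
  by (auto simp: twofun_eq_def CD_def lpstar_def lpfun_id_def twofun_id_def lpstar_m1_def)

lemma lpstar_lpfun_comp:
  "twofun_eq (CD D) (lpstar (lpfun_comp K F)) (twofun_comp (lpstar K) (lpstar F))"
  by (auto simp: twofun_eq_def CD_def lpstar_def lpfun_comp_def twofun_comp_def lpstar_m1_def)

lemma lpstar_faithful:
  assumes "twofun_eq (CD D) (lpstar F) (lpstar G)"
  shows "lpfun_eq D F G"
  unfolding lpfun_eq_def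
proof (intro conjI ballI allI impI)
  show "FOb F A = FOb G A" if "A \<in> LOb D" for A
    using assms that by (simp add: twofun_eq_def CD_def lpstar_def)
  fix A B s g assume "A \<in> LOb D" "B \<in> LOb D" "0 \<le> s \<and> g \<in> LHom D A B s"
  then have "TM1 (lpstar F) (A, B, s, g) = TM1 (lpstar G) (A, B, s, g)"
    using assms by (simp add: twofun_eq_def CD_def)
  then show "FMor F A B s g = FMor G A B s g"
    by (simp add: lpstar_def lpstar_m1_def)
qed

theorem theorem5p25:
  fixes D :: "('o, 'm) lpc" and E :: "('p, 'n) lpc" and H :: "('q, 'k) lpc"
    and F G :: "('o, 'm, 'p, 'n) lpfun" and K :: "('p, 'n, 'q, 'k) lpfun"
    and A B :: 'o
  shows "(is_lpc D \<longrightarrow> weighted_twocat (CD D) WD1 WD2) \<and>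
    (is_lpc D \<and> is_lpc E \<and> is_lpfunctor D E F \<longrightarrow>
       lipschitz_twofun (CD D) WD1 WD2 (CD E) WD1 WD2 (lpstar F)) \<and>
    (is_lpc D \<longrightarrow> twofun_eq (CD D) (lpstar (lpfun_id :: ('o, 'm, 'o, 'm) lpfun)) twofun_id) \<and>
    (is_lpc D \<and> is_lpc E \<and> is_lpc H \<and> is_lpfunctor D E F \<and> is_lpfunctor E H K \<longrightarrow>
       twofun_eq (CD D) (lpstar (lpfun_comp K F)) (twofun_comp (lpstar K) (lpstar F))) \<and>
    (is_lpc D \<and> is_lpc E \<and> is_lpfunctor D E F \<and> is_lpfunctor D E G \<and>
       twofun_eq (CD D) (lpstar F) (lpstar G) \<longrightarrow> lpfun_eq D F G) \<and>
    (is_lpc D \<and> A \<in> LOb D \<and> B \<in> LOb D \<longrightarrow> lpc_dist D A B = wdist (CD D) WD1 WD2 A B)"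
proof (intro conjI impI)
  show "weighted_twocat (CD D) WD1 WD2" if "is_lpc D"
    using that by (rule locally_persistent_category.weighted_twocat_CD[OF locally_persistent_category.intro])
  show "lipschitz_twofun (CD D) WD1 WD2 (CD E) WD1 WD2 (lpstar F)"
    if "is_lpc D \<and> is_lpc E \<and> is_lpfunctor D E F"
    using that by (blast intro: lp_functor.lipschitz_lpstar lp_functor.intro)
  show "twofun_eq (CD D) (lpstar (lpfun_id :: ('o, 'm, 'o, 'm) lpfun)) twofun_id"
    by (rule lpstar_lpfun_id)
  show "twofun_eq (CD D) (lpstar (lpfun_comp K F)) (twofun_comp (lpstar K) (lpstar F))"
    by (rule lpstar_lpfun_comp)
  show "lpfun_eq D F G" if "is_lpc D \<and> is_lpc E \<and> is_lpfunctor D E F \<and> is_lpfunctor D E G \<and>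
       twofun_eq (CD D) (lpstar F) (lpstar G)"
    using that by (blast intro: lpstar_faithful)
  show "lpc_dist D A B = wdist (CD D) WD1 WD2 A B" if "is_lpc D \<and> A \<in> LOb D \<and> B \<in> LOb D"
    using that by (blast intro: locally_persistent_category.lpc_dist_eq_wdist locally_persistent_category.intro)
qed

end
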